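(* Let $F$ be a number field, $D$ a quaternion $F$-algebra, $\mathcal O$ an $O_F$-order in $D$, $K$ a maximal subfield of $D$, and $B=K\cap\mathcal O$. Let $\mathfrak b$ be a locally principal integral ideal of $B$. Then $\mathfrak b$ is a primitive $B$-ideal if and only if $\mathfrak b\mathcal O$ is a primitive right $\mathcal O$-ideal.
   Context: For an $O_F$-order $\Lambda$ in a simple $F$-algebra and a finite place $\mathfrak p$, a fractional right $\Lambda_{\mathfrak p}$-ideal is primitive if it is integral, principal, and not contained in $\mathfrak p\Lambda_{\mathfrak p}$; a fractional right $\Lambda$-ideal $L$ is primitive if $L_{\mathfrak p}$ is primitive for every finite place $\mathfrak p$. *)

theory Defs
  imports Main
begin

text \<open>Ambient setting: the quaternion algebra D is the whole carrier of a type
  'a of class ring_1; the number field F, its ring of integers, orders, lattices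
  and ideals are subsets of this type.\<close>

definition subfield :: "'a::ring_1 set \<Rightarrow> bool" where
  "subfield S \<longleftrightarrow> (0::'a) \<noteq> 1 \<and> 0 \<in> S \<and> 1 \<in> S \<and>
     (\<forall>x\<in>S. \<forall>y\<in>S. x + y \<in> S \<and> x - y \<in> S \<and> x * y \<in> S \<and> x * y = y * x) \<and>
     (\<forall>x\<in>S. x \<noteq> 0 \<longrightarrow> (\<exists>y\<in>S. x * y = 1))"

definition number_field :: "'a::ring_1 set \<Rightarrow> bool" where
  "number_field F \<longleftrightarrow> subfield F \<and> (\<forall>n::nat. n > 0 \<longrightarrow> of_nat n \<noteq> (0::'a)) \<and>
     (\<exists>S. finite S \<and> S \<subseteq> F \<and>
        (\<forall>x\<in>F. \<exists>n::int. n \<noteq> 0 \<and> (\<exists>c::'a \<Rightarrow> int. of_int n * x = (\<Sum>s\<in>S. of_int (c s) * s))))"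

definition ring_of_integers :: "'a::ring_1 set \<Rightarrow> 'a set" where
  "ring_of_integers F = {x \<in> F. \<exists>(n::nat) (c::nat \<Rightarrow> int). x ^ n + (\<Sum>i<n. of_int (c i) * x ^ i) = 0}"

definition finite_place :: "'a::ring_1 set \<Rightarrow> 'a set \<Rightarrow> bool" where
  "finite_place F p \<longleftrightarrow> p \<subseteq> ring_of_integers F \<and> 0 \<in> p \<and>
     (\<forall>x\<in>p. \<forall>y\<in>p. x + y \<in> p) \<and> (\<forall>a\<in>ring_of_integers F. \<forall>x\<in>p. a * x \<in> p) \<and>
     p \<noteq> {0} \<and> p \<noteq> ring_of_integers F \<and>
     (\<forall>a\<in>ring_of_integers F. \<forall>b\<in>ring_of_integers F. a * b \<in> p \<longrightarrow> a \<in> p \<or> b \<in> p)"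

definition loc :: "'a::ring_1 set \<Rightarrow> 'a set \<Rightarrow> 'a set \<Rightarrow> 'a set" where
  "loc F p X = {y. \<exists>s \<in> ring_of_integers F - p. s * y \<in> X}"

definition setmul :: "'a::ring_1 set \<Rightarrow> 'a set \<Rightarrow> 'a set" where
  "setmul X Y = {x * y | x y. x \<in> X \<and> y \<in> Y}"

definition addgen :: "'a::ring_1 set \<Rightarrow> 'a set" where
  "addgen X = {sum_list xs | xs. set xs \<subseteq> X}"

definition iprod :: "'a::ring_1 set \<Rightarrow> 'a set \<Rightarrow> 'a set" where
  "iprod X Y = addgen (setmul X Y)"

definition lattice :: "'a::ring_1 set \<Rightarrow> 'a set \<Rightarrow> 'a set \<Rightarrow> bool" where
  "lattice F V L \<longleftrightarrow> L \<subseteq> V \<and> 0 \<in> L \<and> (\<forall>x\<in>L. \<forall>y\<in>L. x + y \<in> L) \<and>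
     (\<forall>a\<in>ring_of_integers F. \<forall>x\<in>L. a * x \<in> L) \<and>
     (\<exists>G. finite G \<and> G \<subseteq> L \<and>
        (\<forall>x\<in>L. \<exists>c. (\<forall>g\<in>G. c g \<in> ring_of_integers F) \<and> x = (\<Sum>g\<in>G. c g * g))) \<and>
     (\<forall>v\<in>V. \<exists>n::int. n \<noteq> 0 \<and> of_int n * v \<in> L)"

definition is_order :: "'a::ring_1 set \<Rightarrow> 'a set \<Rightarrow> 'a set \<Rightarrow> bool" where
  "is_order F A \<Lambda> \<longleftrightarrow> lattice F A \<Lambda> \<and> 1 \<in> \<Lambda> \<and> (\<forall>x\<in>\<Lambda>. \<forall>y\<in>\<Lambda>. x * y \<in> \<Lambda>)"

definition frac_right_ideal :: "'a::ring_1 set \<Rightarrow> 'a set \<Rightarrow> 'a set \<Rightarrow> 'a set \<Rightarrow> bool" where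
  "frac_right_ideal F A \<Lambda> L \<longleftrightarrow> lattice F A L \<and> setmul L \<Lambda> \<subseteq> L"

definition locally_principal :: "'a::ring_1 set \<Rightarrow> 'a set \<Rightarrow> 'a set \<Rightarrow> 'a set \<Rightarrow> bool" where
  "locally_principal F A \<Lambda> L \<longleftrightarrow>
     (\<forall>p. finite_place F p \<longrightarrow> (\<exists>x\<in>A. loc F p L = setmul {x} (loc F p \<Lambda>)))"

definition loc_primitive :: "'a::ring_1 set \<Rightarrow> 'a set \<Rightarrow> 'a set \<Rightarrow> 'a set \<Rightarrow> 'a set \<Rightarrow> bool" where
  "loc_primitive F A p \<Lambda> L \<longleftrightarrow>
     loc F p L \<subseteq> loc F p \<Lambda> \<and>
     (\<exists>x\<in>A. loc F p L = setmul {x} (loc F p \<Lambda>)) \<and>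
     \<not> (loc F p L \<subseteq> iprod p (loc F p \<Lambda>))"

definition primitive :: "'a::ring_1 set \<Rightarrow> 'a set \<Rightarrow> 'a set \<Rightarrow> 'a set \<Rightarrow> bool" where
  "primitive F A \<Lambda> L \<longleftrightarrow> frac_right_ideal F A \<Lambda> L \<and>
     (\<forall>p. finite_place F p \<longrightarrow> loc_primitive F A p \<Lambda> L)"

definition center :: "'a::ring_1 set" where
  "center = {z. \<forall>y. z * y = y * z}"

definition quaternion_algebra :: "'a::ring_1 set \<Rightarrow> bool" where
  "quaternion_algebra F \<longleftrightarrow> center = F \<and>
     (\<forall>I::'a set. (0 \<in> I \<and> (\<forall>x\<in>I. \<forall>y\<in>I. x - y \<in> I) \<and> (\<forall>x\<in>I. \<forall>y. x * y \<in> I \<and> y * x \<in> I))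
        \<longrightarrow> I = {0} \<or> I = UNIV) \<and>
     (\<exists>e::nat \<Rightarrow> 'a.
        (\<forall>c. (\<forall>i<4. c i \<in> F) \<and> (\<Sum>i<4. c i * e i) = 0 \<longrightarrow> (\<forall>i<4. c i = 0)) \<and>
        (\<forall>x. \<exists>c. (\<forall>i<4. c i \<in> F) \<and> x = (\<Sum>i<4. c i * e i)))"

definition maximal_subfield :: "'a::ring_1 set \<Rightarrow> 'a set \<Rightarrow> bool" where
  "maximal_subfield F K \<longleftrightarrow> subfield K \<and> F \<subseteq> K \<and>
     (\<forall>K'. subfield K' \<and> K \<subseteq> K' \<longrightarrow> K' = K)"

end

theory Submission
  imports Defs "Jordan_Normal_Form.Char_Poly"
begin

text \<open>At a finite place \<open>p\<close> we have \<open>b\<^sub>p = x B\<^sub>p\<close>, hence \<open>(b\<O>)\<^sub>p = x \<O>\<^sub>p\<close>, and both ideals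
  are integral and principal at \<open>p\<close>; so \<open>b\<close> is primitive at \<open>p\<close> iff \<open>x \<notin> p B\<^sub>p\<close>, and \<open>b\<O>\<close>
  is iff \<open>x \<notin> p \<O>\<^sub>p\<close>. The two agree for \<open>x \<in> K\<close>: the local ring \<open>O\<^sub>F\<^sub>,\<^sub>p\<close> is a valuation
  ring (it is local, integrally closed, and every element of \<open>F\<close> is algebraic), so
  \<open>p \<O>\<^sub>p = a \<O>\<^sub>p\<close> for a single \<open>a \<in> p \<subseteq> K\<close>, and then \<open>a\<^sup>-\<^sup>1 x \<in> \<O>\<^sub>p \<inter> K = B\<^sub>p\<close>.
  The needed facts about \<open>O\<^sub>F\<close> (a ring, integrally closed) come from the determinant trick.\<close>

section \<open>Spans over the integers and the determinant trick\<close>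

inductive_set zspan :: "'a::ring_1 set \<Rightarrow> 'a set" for G where
  base: "g \<in> G \<Longrightarrow> g \<in> zspan G"
| zero: "0 \<in> zspan G"
| diff: "x \<in> zspan G \<Longrightarrow> y \<in> zspan G \<Longrightarrow> x - y \<in> zspan G"

lemma zspan_uminus: "x \<in> zspan G \<Longrightarrow> - x \<in> zspan G"
  using zspan.diff[OF zspan.zero, of x G] by simp

lemma zspan_add: "x \<in> zspan G \<Longrightarrow> y \<in> zspan G \<Longrightarrow> x + y \<in> zspan G"
  using zspan.diff[of x G "- y"] zspan_uminus[of y G] by simp

lemma zspan_sum: "(\<And>i. i \<in> I \<Longrightarrow> f i \<in> zspan G) \<Longrightarrow> sum f I \<in> zspan G"
  by (induction I rule: infinite_finite_induct) (auto intro: zspan_add zspan.zero)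

lemma zspan_of_int_mult:
  assumes "x \<in> zspan G" shows "of_int m * x \<in> zspan G"
proof -
  have nat: "of_nat n * x \<in> zspan G" for n
    by (induction n) (auto simp: distrib_right intro: zspan_add zspan.zero assms)
  have "of_int m * x = of_nat (nat m) * x - of_nat (nat (- m)) * x"
    by (cases "m \<ge> 0") (simp_all add: left_diff_distrib)
  then show ?thesis using zspan.diff nat by metis
qed

lemma zspan_minimal:
  assumes "0 \<in> S" "\<And>x y. x \<in> S \<Longrightarrow> y \<in> S \<Longrightarrow> x - y \<in> S" "G \<subseteq> S"
  shows "zspan G \<subseteq> S"
proof
  show "x \<in> S" if "x \<in> zspan G" for x
    using that by (induction rule: zspan.induct) (use assms in auto)
qed

lemma zspan_mult_left:
  assumes "\<And>g. g \<in> G \<Longrightarrow> y * g \<in> zspan H" "x \<in> zspan G"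
  shows "y * x \<in> zspan H"
proof -
  have "zspan G \<subseteq> {x. y * x \<in> zspan H}"
    by (rule zspan_minimal) (use assms(1) in \<open>auto simp: right_diff_distrib intro: zspan.diff zspan.zero\<close>)
  then show ?thesis using assms(2) by blast
qed

lemma zspan_mult_right:
  assumes "\<And>g. g \<in> G \<Longrightarrow> g * y \<in> zspan H" "x \<in> zspan G"
  shows "x * y \<in> zspan H"
proof -
  have "zspan G \<subseteq> {x. x * y \<in> zspan H}"
    by (rule zspan_minimal) (use assms(1) in \<open>auto simp: left_diff_distrib intro: zspan.diff zspan.zero\<close>)
  then show ?thesis using assms(2) by blast
qed

lemma zspan_finite_repr:
  assumes "finite G" "x \<in> zspan G"
  shows "\<exists>c. x = (\<Sum>g\<in>G. of_int (c g) * g)"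
  using assms(2)
proof (induction rule: zspan.induct)
  case (base g)
  have "(\<Sum>h\<in>G. of_int (if h = g then 1 else 0) * h) = (\<Sum>h\<in>G. if h = g then h else 0)"
    by (rule sum.cong) auto
  also have "\<dots> = g" using assms(1) base by simp
  finally show ?case by (metis (no_types))
next
  case zero
  show ?case by (rule exI[of _ "\<lambda>_. 0"]) simp
next
  case (diff x y)
  then obtain c d where "x = (\<Sum>g\<in>G. of_int (c g) * g)" "y = (\<Sum>g\<in>G. of_int (d g) * g)" by blast
  then show ?case
    by (intro exI[of _ "\<lambda>g. c g - d g"]) (simp add: sum_subtractf left_diff_distrib)
qed

text \<open>The library's \<open>poly\<close> needs a commutative ring, so integer polynomials are evaluated
  here by the Horner scheme directly.\<close>

definition eval_int_poly :: "int poly \<Rightarrow> 'a::ring_1 \<Rightarrow> 'a" where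
  "eval_int_poly p x = fold_coeffs (\<lambda>a r. of_int a + x * r) p 0"

lemma eval_int_poly_0 [simp]: "eval_int_poly 0 x = 0"
  by (simp add: eval_int_poly_def)

lemma eval_int_poly_pCons [simp]: "eval_int_poly (pCons a p) x = of_int a + x * eval_int_poly p x"
  by (cases "p = 0 \<and> a = 0") (auto simp: eval_int_poly_def)

lemma eval_int_poly_add [simp]: "eval_int_poly (p + q) x = eval_int_poly p x + eval_int_poly q x"
proof (induction p arbitrary: q)
  case (pCons a p)
  then show ?case by (cases q) (simp add: algebra_simps)
qed simp

lemma eval_int_poly_smult [simp]:
  "eval_int_poly (Polynomial.smult a p) x = of_int a * eval_int_poly p x"
proof (induction p)
  case (pCons b p)
  have "x * (of_int a * eval_int_poly p x) = of_int a * (x * eval_int_poly p x)"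
    by (metis mult.assoc mult_of_int_commute)
  then show ?case using pCons by (simp add: distrib_left)
qed simp

lemma eval_int_poly_1 [simp]: "eval_int_poly 1 x = 1"
  by (simp add: one_pCons)

lemma eval_int_poly_mult [simp]: "eval_int_poly (p * q) x = eval_int_poly p x * eval_int_poly q x"
proof (induction p)
  case (pCons a p)
  then show ?case by (simp add: mult_pCons_left distrib_right mult.assoc)
qed simp

lemma eval_int_poly_sum: "eval_int_poly (\<Sum>i\<in>I. f i) x = (\<Sum>i\<in>I. eval_int_poly (f i) x)"
  by (induction I rule: infinite_finite_induct) simp_all

lemma eval_int_poly_as_sum:
  "degree p < N \<Longrightarrow> eval_int_poly p x = (\<Sum>i<N. of_int (coeff p i) * x ^ i)"
proof (induction p arbitrary: N)
  case (pCons a p)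
  from pCons.prems obtain M where N: "N = Suc M" by (cases N) auto
  have IH: "eval_int_poly p x = (\<Sum>i<M. of_int (coeff p i) * x ^ i)"
    using pCons N by (cases "p = 0") simp_all
  have "of_int (coeff p i) * x ^ Suc i = x * (of_int (coeff p i) * x ^ i)" for i
    by (metis mult.assoc mult_of_int_commute power_Suc)
  then show ?case
    unfolding N sum.lessThan_Suc_shift by (simp add: IH sum_distrib_left)
qed simp

text \<open>The determinant trick: multiplying the system \<open>(x I - A) g = 0\<close> by the adjugate
  of \<open>x I - A\<close> gives \<open>\<chi>\<^sub>A(x) g = 0\<close>.\<close>

lemma char_poly_annihilates_generators:
  fixes x :: "'a::ring_1" and A :: "int mat"
  assumes A: "A \<in> carrier_mat m m" and i: "i < m"
    and act: "\<And>i. i < m \<Longrightarrow> x * g i = (\<Sum>j<m. of_int (A $$ (i,j)) * g j)"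
  shows "eval_int_poly (char_poly A) x * g i = 0"
proof -
  define B where "B = char_poly_matrix A"
  have B: "B \<in> carrier_mat m m" using A by (simp add: B_def)
  have B_row: "(\<Sum>k<m. eval_int_poly (B $$ (j,k)) x * g k) = 0" if j: "j < m" for j
  proof -
    have "(\<Sum>k<m. eval_int_poly (B $$ (j,k)) x * g k)
        = (\<Sum>k<m. (if j = k then x * g k else 0) - of_int (A $$ (j,k)) * g k)"
      using A j by (intro sum.cong) (simp_all add: B_def char_poly_matrix_def left_diff_distrib)
    also have "\<dots> = 0" using j act[OF j] by (simp add: sum_subtractf)
    finally show ?thesis .
  qed
  have adj_B: "(\<Sum>j<m. adj_mat B $$ (i,j) * B $$ (j,k)) = (if i = k then char_poly A else 0)"
    if k: "k < m" for k
  proof -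
    have "adj_mat B * B = char_poly A \<cdot>\<^sub>m 1\<^sub>m m"
      using adj_mat(3)[OF B] by (simp add: char_poly_def B_def)
    moreover have "(adj_mat B * B) $$ (i,k) = (\<Sum>j<m. adj_mat B $$ (i,j) * B $$ (j,k))"
      using i k adj_mat(1)[OF B] B by (simp add: scalar_prod_def atLeast0LessThan)
    ultimately show ?thesis using i k by auto
  qed
  have "eval_int_poly (char_poly A) x * g i
      = (\<Sum>k<m. if i = k then eval_int_poly (char_poly A) x * g k else 0)"
    using i by simp
  also have "\<dots> = (\<Sum>k<m. eval_int_poly (\<Sum>j<m. adj_mat B $$ (i,j) * B $$ (j,k)) x * g k)"
    by (rule sum.cong) (simp_all add: adj_B)
  also have "\<dots> = (\<Sum>k<m. \<Sum>j<m. eval_int_poly (adj_mat B $$ (i,j)) x * eval_int_poly (B $$ (j,k)) x * g k)"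
    by (simp only: eval_int_poly_sum eval_int_poly_mult sum_distrib_right)
  also have "\<dots> = (\<Sum>j<m. eval_int_poly (adj_mat B $$ (i,j)) x * (\<Sum>k<m. eval_int_poly (B $$ (j,k)) x * g k))"
    by (subst sum.swap) (simp add: sum_distrib_left mult.assoc)
  also have "\<dots> = 0" by (simp add: B_row)
  finally show ?thesis .
qed

lemma zspan_monic_annihilator:
  fixes x :: "'a::ring_1"
  assumes G: "finite G" and x: "\<And>g. g \<in> G \<Longrightarrow> x * g \<in> zspan G"
  shows "\<exists>n c. \<forall>y\<in>zspan G. (x ^ n + (\<Sum>i<n. of_int (c i) * x ^ i)) * y = 0"
proof -
  obtain gs where gs: "set gs = G" "distinct gs" using finite_distinct_list[OF G] by blast
  define m where "m = length gs"
  have reindex: "(\<Sum>g\<in>G. f g) = (\<Sum>j<m. f (gs ! j))" for f :: "'a \<Rightarrow> 'a"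
    using sum.distinct_set_conv_list[OF gs(2), of f] gs(1)
    by (simp add: m_def sum_list_sum_nth atLeast0LessThan)
  have "\<forall>i<m. \<exists>c. x * gs ! i = (\<Sum>g\<in>G. of_int (c g) * g)"
    using x zspan_finite_repr[OF G] gs by (auto simp: m_def)
  then obtain C where C: "\<And>i. i < m \<Longrightarrow> x * gs ! i = (\<Sum>g\<in>G. of_int (C i g) * g)" by metis
  define A :: "int mat" where "A = mat m m (\<lambda>(i,j). C i (gs ! j))"
  have A: "A \<in> carrier_mat m m" by (simp add: A_def)
  define \<chi> where "\<chi> = char_poly A"
  have act: "x * gs ! i = (\<Sum>j<m. of_int (A $$ (i,j)) * gs ! j)" if "i < m" for i
    using C[OF that] reindex[of "\<lambda>g. of_int (C i g) * g"] that by (simp add: A_def)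
  have kills_gens: "eval_int_poly \<chi> x * gs ! i = 0" if "i < m" for i
    unfolding \<chi>_def using char_poly_annihilates_generators[OF A that, of x "(!) gs"] act by blast
  have "degree \<chi> = m" "coeff \<chi> m = 1"
    using degree_monic_char_poly[OF A] by (simp_all add: \<chi>_def)
  then have \<chi>_expand: "eval_int_poly \<chi> x = x ^ m + (\<Sum>i<m. of_int (coeff \<chi> i) * x ^ i)"
    using eval_int_poly_as_sum[of \<chi> "Suc m" x] by (simp add: add.commute)
  have "zspan G \<subseteq> {y. eval_int_poly \<chi> x * y = 0}"
    by (rule zspan_minimal) (use kills_gens gs in \<open>auto simp: m_def in_set_conv_nth right_diff_distrib\<close>)
  then show ?thesis
    unfolding \<chi>_expand by (intro exI[of _ m] exI[of _ "coeff \<chi>"]) blast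
qed

section \<open>The ring of integers\<close>

definition algebraic_integer :: "'a::ring_1 \<Rightarrow> bool" where
  "algebraic_integer x \<longleftrightarrow> (\<exists>n c. x ^ n + (\<Sum>i<n. of_int (c i) * x ^ i) = 0)"

locale central_number_field =
  fixes F :: "'a::ring_1 set"
  assumes number_field: "number_field F" and F_central: "F \<subseteq> center"
begin

abbreviation "OF \<equiv> ring_of_integers F"

lemma subfield_F: "subfield F"
  using number_field by (simp add: number_field_def)

lemma F_0 [simp, intro]: "0 \<in> F" and F_1 [simp, intro]: "1 \<in> F" and nontrivial: "(0::'a) \<noteq> 1"
  using subfield_F by (auto simp: subfield_def)

lemma F_add [intro]: "x \<in> F \<Longrightarrow> y \<in> F \<Longrightarrow> x + y \<in> F"
  and F_diff [intro]: "x \<in> F \<Longrightarrow> y \<in> F \<Longrightarrow> x - y \<in> F"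
  and F_mult [intro]: "x \<in> F \<Longrightarrow> y \<in> F \<Longrightarrow> x * y \<in> F"
  using subfield_F by (auto simp: subfield_def)

lemma F_commute: "x \<in> F \<Longrightarrow> x * y = y * x"
  using F_central by (auto simp: center_def)

lemma F_left_commute: "x \<in> F \<Longrightarrow> y * (x * z) = x * (y * z)"
  using F_commute[of x y] by (simp add: mult.assoc[symmetric])

lemma F_inverse:
  assumes "x \<in> F" "x \<noteq> 0"
  obtains y where "y \<in> F" "x * y = 1" "y * x = 1"
proof -
  obtain y where "y \<in> F" "x * y = 1"
    using subfield_F assms unfolding subfield_def by blast
  then show ?thesis using that F_commute[OF assms(1), of y] by simp
qed

lemma F_cancel_left:
  assumes "x \<in> F" "x \<noteq> 0" "x * z = 0" shows "z = 0"
proof -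
  obtain y where "y * x = 1" using F_inverse assms by blast
  then have "z = y * (x * z)" by (simp add: mult.assoc[symmetric])
  also have "\<dots> = 0" using assms(3) by simp
  finally show ?thesis .
qed

lemma F_power [intro]: "x \<in> F \<Longrightarrow> x ^ n \<in> F"
  by (induction n) auto

lemma F_of_int [intro]: "of_int n \<in> F"
proof -
  have nat: "of_nat k \<in> F" for k by (induction k) auto
  have "(of_int n :: 'a) = of_nat (nat n) - of_nat (nat (- n))" by (cases "n \<ge> 0") simp_all
  then show ?thesis using nat F_diff by metis
qed

lemma of_int_neq_0: "n \<noteq> 0 \<Longrightarrow> (of_int n :: 'a) \<noteq> 0"
proof -
  have char_0: "(of_nat k :: 'a) \<noteq> 0" if "k > 0" for k
    using number_field that by (auto simp: number_field_def)
  assume "n \<noteq> 0"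
  then have "(of_nat (nat \<bar>n\<bar>) :: 'a) \<noteq> 0" by (intro char_0) simp
  then show ?thesis by (cases "n \<ge> 0") simp_all
qed

lemma power_mult_central:
  assumes "c \<in> F" shows "(c * u) ^ n = c ^ n * u ^ n"
proof (induction n)
  case (Suc n)
  have "u * c ^ n = c ^ n * u" using F_commute[OF F_power[OF assms]] by simp
  then show ?case using Suc by (simp add: mult.assoc) (metis mult.assoc)
qed simp

lemma power_mult_monomial:
  assumes c: "c \<in> F" and r: "r \<in> F" and i: "i \<le> n"
  shows "c ^ n * (r * u ^ i) = (r * c ^ (n - i)) * (c * u) ^ i"
proof -
  have "c ^ n * (r * u ^ i) = r * (c ^ n * u ^ i)" by (rule F_left_commute[OF r])
  also have "\<dots> = r * (c ^ (n - i) * (c ^ i * u ^ i))"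
    using i by (simp add: mult.assoc[symmetric] power_add[symmetric])
  also have "\<dots> = (r * c ^ (n - i)) * (c * u) ^ i"
    by (simp add: power_mult_central[OF c] mult.assoc)
  finally show ?thesis .
qed

lemma ring_of_integers_eq: "OF = {x \<in> F. algebraic_integer x}"
  by (simp add: ring_of_integers_def algebraic_integer_def)

lemma OF_subset_F: "x \<in> OF \<Longrightarrow> x \<in> F"
  by (simp add: ring_of_integers_eq)

text \<open>Sums and products of algebraic integers are handled through finitely generated subrings
  of \<open>F\<close>: their elements are integral by the determinant trick, and adjoining an integral
  element keeps them finitely generated.\<close>

definition ring_generators :: "'a set \<Rightarrow> bool" where
  "ring_generators G \<longleftrightarrow> finite G \<and> G \<subseteq> F \<and> 1 \<in> zspan G \<and> (\<forall>g\<in>G. \<forall>h\<in>G. g * h \<in> zspan G)"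

lemma ring_generators_one: "ring_generators {1}"
  unfolding ring_generators_def using zspan.base[of 1 "{1}"] by simp

lemma ring_generators_mult:
  assumes "ring_generators G" "x \<in> zspan G" "y \<in> zspan G"
  shows "x * y \<in> zspan G"
proof (rule zspan_mult_right[OF _ assms(2)])
  show "g * y \<in> zspan G" if "g \<in> G" for g
    by (rule zspan_mult_left[OF _ assms(3)]) (use assms(1) that in \<open>auto simp: ring_generators_def\<close>)
qed

lemma ring_generators_algebraic_integer:
  assumes G: "ring_generators G" and x: "x \<in> zspan G"
  shows "algebraic_integer x"
proof -
  have "finite G" "1 \<in> zspan G" using G by (simp_all add: ring_generators_def)
  moreover have "x * g \<in> zspan G" if "g \<in> G" for g
    using ring_generators_mult[OF G x zspan.base[OF that]] .
  ultimately obtain n c where "(x ^ n + (\<Sum>i<n. of_int (c i) * x ^ i)) * 1 = 0"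
    using zspan_monic_annihilator by metis
  then show ?thesis unfolding algebraic_integer_def by auto
qed

lemma zspan_mult_power_adjoin_root:
  assumes G: "ring_generators G" and root: "z ^ d = (\<Sum>j<d. f j * z ^ j)"
    and f: "\<And>j. j < d \<Longrightarrow> f j \<in> zspan G" and x: "x \<in> zspan G"
  shows "x * z ^ k \<in> zspan ((\<lambda>(g, j). g * z ^ j) ` (G \<times> {..<d}))"
  using x
proof (induction k arbitrary: x rule: less_induct)
  case (less k)
  show ?case
  proof (cases "k < d")
    case True
    show ?thesis
      by (rule zspan_mult_right[OF _ less.prems]) (use True in \<open>auto intro!: zspan.base\<close>)
  next
    case False
    have d: "d > 0" using root nontrivial by (cases d) auto
    have "x * z ^ k = x * z ^ d * z ^ (k - d)"
      using False by (simp add: mult.assoc power_add[symmetric])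
    also have "\<dots> = (\<Sum>j<d. (x * f j) * z ^ (j + (k - d)))"
      unfolding root by (simp add: sum_distrib_left sum_distrib_right mult.assoc power_add)
    also have "\<dots> \<in> zspan ((\<lambda>(g, j). g * z ^ j) ` (G \<times> {..<d}))"
    proof (rule zspan_sum)
      fix j assume "j \<in> {..<d}"
      then have "j + (k - d) < k" "x * f j \<in> zspan G"
        using False d ring_generators_mult[OF G less.prems f] by auto
      then show "x * f j * z ^ (j + (k - d)) \<in> zspan ((\<lambda>(g, j). g * z ^ j) ` (G \<times> {..<d}))"
        using less.IH by blast
    qed
    finally show ?thesis .
  qed
qed

lemma ring_generators_adjoin_root:
  assumes G: "ring_generators G" and z: "z \<in> F" and root: "z ^ d = (\<Sum>j<d. f j * z ^ j)"
    and f: "\<And>j. j < d \<Longrightarrow> f j \<in> zspan G"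
  obtains G' where "ring_generators G'" "zspan G \<subseteq> zspan G'" "z \<in> zspan G'"
proof -
  define G' where "G' = (\<lambda>(g, j). g * z ^ j) ` (G \<times> {..<d})"
  have powers: "x * z ^ k \<in> zspan G'" if "x \<in> zspan G" for x k
    unfolding G'_def using zspan_mult_power_adjoin_root[OF G root f that] .
  have GF: "G \<subseteq> F" and one: "1 \<in> zspan G" using G by (simp_all add: ring_generators_def)
  have sub: "zspan G \<subseteq> zspan G'" using powers[of _ 0] by auto
  have "ring_generators G'"
    unfolding ring_generators_def
  proof (intro conjI ballI)
    show "finite G'" using G by (simp add: G'_def ring_generators_def)
    show "G' \<subseteq> F" using GF z by (auto simp: G'_def)
    show "1 \<in> zspan G'" using sub one by auto
    fix a b assume "a \<in> G'" "b \<in> G'"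
    then obtain g i h j where ab: "g \<in> G" "h \<in> G" "a = g * z ^ i" "b = h * z ^ j"
      by (auto simp: G'_def)
    have "z ^ i * h = h * z ^ i"
      using F_commute[of h "z ^ i"] GF ab(2) by auto
    then have "a * b = (g * h) * z ^ (i + j)"
      using ab by (simp add: mult.assoc power_add) (metis mult.assoc)
    moreover have "g * h \<in> zspan G" using G ab by (simp add: ring_generators_def)
    ultimately show "a * b \<in> zspan G'" using powers by auto
  qed
  moreover have "z \<in> zspan G'" using powers[OF one, of 1] by simp
  ultimately show ?thesis using sub that by blast
qed

lemma exists_ring_generators:
  assumes "finite E" "E \<subseteq> OF"
  obtains G where "ring_generators G" "E \<subseteq> zspan G"
  using assms
proof (induction E arbitrary: thesis rule: finite_induct)
  case empty
  then show ?case using ring_generators_one by blast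
next
  case (insert e E)
  then obtain G where G: "ring_generators G" "E \<subseteq> zspan G" by auto
  have e: "e \<in> F" "algebraic_integer e" using insert by (auto simp: ring_of_integers_eq)
  then obtain n c where "e ^ n + (\<Sum>i<n. of_int (c i) * e ^ i) = 0"
    unfolding algebraic_integer_def by blast
  then have root: "e ^ n = (\<Sum>i<n. of_int (- c i) * e ^ i)"
    by (simp add: sum_negf eq_neg_iff_add_eq_0)
  have "of_int (- c i) \<in> zspan G" for i
    using zspan_of_int_mult[of 1 G "- c i"] G by (simp add: ring_generators_def)
  then obtain G' where "ring_generators G'" "zspan G \<subseteq> zspan G'" "e \<in> zspan G'"
    using ring_generators_adjoin_root[OF G(1) e(1) root] by blast
  then show ?case using insert.prems G(2) by blast
qed

lemma OF_add: "x \<in> OF \<Longrightarrow> y \<in> OF \<Longrightarrow> x + y \<in> OF"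
  and OF_mult: "x \<in> OF \<Longrightarrow> y \<in> OF \<Longrightarrow> x * y \<in> OF"
proof -
  assume xy: "x \<in> OF" "y \<in> OF"
  obtain G where G: "ring_generators G" "{x, y} \<subseteq> zspan G"
    using exists_ring_generators[of "{x, y}"] xy by auto
  have F: "x \<in> F" "y \<in> F" using xy OF_subset_F by auto
  show "x + y \<in> OF"
    using G F ring_generators_algebraic_integer[OF G(1) zspan_add] by (auto simp: ring_of_integers_eq)
  show "x * y \<in> OF"
    using G F ring_generators_algebraic_integer[OF G(1) ring_generators_mult[OF G(1)]]
    by (auto simp: ring_of_integers_eq)
qed

lemma OF_of_int [intro]: "of_int n \<in> OF"
  using ring_generators_algebraic_integer[OF ring_generators_one zspan_of_int_mult[OF zspan.base]]
  by (auto simp: ring_of_integers_eq)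

lemma OF_0 [intro]: "0 \<in> OF" and OF_1 [intro]: "1 \<in> OF"
  using OF_of_int[of 0] OF_of_int[of 1] by auto

lemma OF_power: "x \<in> OF \<Longrightarrow> x ^ n \<in> OF"
  by (induction n) (auto intro: OF_mult)

lemma OF_sum: "(\<And>i. i \<in> I \<Longrightarrow> f i \<in> OF) \<Longrightarrow> sum f I \<in> OF"
  by (induction I rule: infinite_finite_induct) (auto intro: OF_add)

lemma OF_integrally_closed:
  assumes z: "z \<in> F" and root: "z ^ n + (\<Sum>i<n. e i * z ^ i) = 0"
    and e: "\<And>i. i < n \<Longrightarrow> e i \<in> OF"
  shows "z \<in> OF"
proof -
  obtain G where G: "ring_generators G" "e ` {..<n} \<subseteq> zspan G"
    using exists_ring_generators[of "e ` {..<n}"] e by auto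
  have root': "z ^ n = (\<Sum>i<n. (- e i) * z ^ i)"
    using root by (simp add: sum_negf eq_neg_iff_add_eq_0)
  have "- e j \<in> zspan G" if "j < n" for j
    using G that zspan_uminus by blast
  then obtain G' where "ring_generators G'" "z \<in> zspan G'"
    using ring_generators_adjoin_root[OF G(1) z root'] by blast
  then show ?thesis using z ring_generators_algebraic_integer by (auto simp: ring_of_integers_eq)
qed

lemma F_rational_span:
  "\<exists>S. finite S \<and> S \<subseteq> F \<and> (\<forall>y\<in>F. \<exists>n::int. n \<noteq> 0 \<and> of_int n * y \<in> zspan S)"
proof -
  obtain S where S: "finite S" "S \<subseteq> F"
    "\<And>y. y \<in> F \<Longrightarrow> \<exists>n::int. n \<noteq> 0 \<and> (\<exists>c::'a \<Rightarrow> int. of_int n * y = (\<Sum>s\<in>S. of_int (c s) * s))"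
    using number_field unfolding number_field_def by blast
  have "\<exists>n::int. n \<noteq> 0 \<and> of_int n * y \<in> zspan S" if y: "y \<in> F" for y
  proof -
    obtain n c where "n \<noteq> 0" "of_int n * y = (\<Sum>s\<in>S. of_int (c s) * s)"
      using S(3)[OF y] by blast
    moreover have "(\<Sum>s\<in>S. of_int (c s) * s) \<in> zspan S"
      by (intro zspan_sum zspan_of_int_mult zspan.base)
    ultimately show ?thesis by auto
  qed
  then show ?thesis using S(1,2) by blast
qed

text \<open>The \<open>\<int>\<close>-module \<open>zspan S\<close> is faithful because it contains a nonzero integer, which is
  cancellable in \<open>F\<close>.\<close>

lemma algebraic_integer_if_stabilizes_zspan:
  fixes S :: "'a set"
  assumes S: "finite S" and m: "m \<noteq> 0" "of_int m \<in> zspan S"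
    and y: "\<And>s. s \<in> S \<Longrightarrow> y * s \<in> zspan S"
  shows "algebraic_integer y"
proof -
  obtain k c where kc: "\<forall>z\<in>zspan S. (y ^ k + (\<Sum>i<k. of_int (c i) * y ^ i)) * z = 0"
    using zspan_monic_annihilator[OF S y] by blast
  define w where "w = y ^ k + (\<Sum>i<k. of_int (c i) * y ^ i)"
  have "w * of_int m = 0" using kc m(2) by (simp add: w_def)
  then have "of_int m * w = 0" by (simp add: mult_of_int_commute)
  then have "w = 0" using F_cancel_left[OF F_of_int of_int_neq_0[OF m(1)]] by blast
  then show ?thesis unfolding algebraic_integer_def w_def by blast
qed

lemma F_denominator:
  assumes x: "x \<in> F"
  obtains N :: int where "N \<noteq> 0" "of_int N * x \<in> OF"
proof -
  obtain S where S: "finite S" "S \<subseteq> F"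
    and span: "\<And>y. y \<in> F \<Longrightarrow> \<exists>n::int. n \<noteq> 0 \<and> of_int n * y \<in> zspan S"
    using F_rational_span by blast
  have "\<forall>s\<in>S. \<exists>n::int. n \<noteq> 0 \<and> of_int n * (x * s) \<in> zspan S" using span x S(2) by blast
  then obtain n where n0: "\<And>s. s \<in> S \<Longrightarrow> n s \<noteq> 0"
    and n: "\<And>s. s \<in> S \<Longrightarrow> of_int (n s) * (x * s) \<in> zspan S"
    by metis
  define N where "N = (\<Prod>s\<in>S. n s)"
  have N: "N \<noteq> 0" using n0 S(1) by (simp add: N_def)
  have "(of_int N * x) * s \<in> zspan S" if s: "s \<in> S" for s
  proof -
    have "N = (\<Prod>t\<in>S - {s}. n t) * n s"
      using S(1) s by (simp add: N_def prod.remove mult.commute)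
    then have "(of_int N * x) * s = of_int (\<Prod>t\<in>S - {s}. n t) * (of_int (n s) * (x * s))"
      by (simp add: mult.assoc)
    also have "\<dots> \<in> zspan S"
      using n[OF s] by (rule zspan_of_int_mult)
    finally show ?thesis .
  qed
  moreover obtain m :: int where "m \<noteq> 0" "of_int m * 1 \<in> zspan S" using span[of 1] by auto
  ultimately have "algebraic_integer (of_int N * x)"
    using algebraic_integer_if_stabilizes_zspan[OF S(1)] by simp
  moreover have "of_int N * x \<in> F" using x by blast
  ultimately show ?thesis using that[OF N] by (simp add: ring_of_integers_eq)
qed

lemma F_algebraic:
  assumes "x \<in> F"
  obtains m and d :: "nat \<Rightarrow> int" where "d m \<noteq> 0" "(\<Sum>i\<le>m. of_int (d i) * x ^ i) = 0"
proof -
  obtain N where N: "N \<noteq> 0" "of_int N * x \<in> OF" using F_denominator[OF assms] by blast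
  then obtain m c where mc: "(of_int N * x) ^ m + (\<Sum>i<m. of_int (c i) * (of_int N * x) ^ i) = 0"
    by (auto simp: ring_of_integers_eq algebraic_integer_def)
  define d where "d i = (if i = m then N ^ m else c i * N ^ i)" for i
  have pw: "(of_int N * x) ^ i = of_int (N ^ i) * x ^ i" for i
    using power_mult_central[OF F_of_int] by simp
  have "(\<Sum>i\<le>m. of_int (d i) * x ^ i) = (\<Sum>i<m. of_int (d i) * x ^ i) + of_int (d m) * x ^ m"
    by (simp add: lessThan_Suc_atMost[symmetric])
  also have "(\<Sum>i<m. of_int (d i) * x ^ i) = (\<Sum>i<m. of_int (c i) * (of_int N * x) ^ i)"
    by (rule sum.cong) (simp_all add: d_def pw mult.assoc)
  also have "of_int (d m) * x ^ m = (of_int N * x) ^ m" by (simp add: d_def pw)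
  finally have "(\<Sum>i\<le>m. of_int (d i) * x ^ i) = 0" using mc by (simp add: add.commute)
  moreover have "d m \<noteq> 0" using N by (simp add: d_def)
  ultimately show ?thesis using that by blast
qed

end

section \<open>Ideal products and localisation at a finite place\<close>

lemma setmul_iff: "z \<in> setmul X Y \<longleftrightarrow> (\<exists>x\<in>X. \<exists>y\<in>Y. z = x * y)"
  unfolding setmul_def by blast

lemma addgen_0: "0 \<in> addgen X"
  unfolding addgen_def by (rule CollectI, rule exI[of _ "[]"]) simp

lemma addgen_add:
  assumes "x \<in> addgen X" "y \<in> addgen X" shows "x + y \<in> addgen X"
proof -
  obtain xs ys where "x = sum_list xs" "set xs \<subseteq> X" "y = sum_list ys" "set ys \<subseteq> X"
    using assms unfolding addgen_def by blast
  then show ?thesis unfolding addgen_def by (intro CollectI exI[of _ "xs @ ys"]) auto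
qed

lemma addgen_base: "x \<in> X \<Longrightarrow> x \<in> addgen X"
  unfolding addgen_def by (rule CollectI, rule exI[of _ "[x]"]) simp

lemma addgen_minimal:
  assumes "0 \<in> S" "\<And>x y. x \<in> X \<Longrightarrow> y \<in> S \<Longrightarrow> x + y \<in> S"
  shows "addgen X \<subseteq> S"
proof
  fix w assume "w \<in> addgen X"
  then obtain xs where "w = sum_list xs" "set xs \<subseteq> X" unfolding addgen_def by blast
  moreover have "set xs \<subseteq> X \<Longrightarrow> sum_list xs \<in> S" by (induction xs) (auto intro: assms)
  ultimately show "w \<in> S" by simp
qed

lemma addgen_mult_left:
  assumes "\<And>x. x \<in> X \<Longrightarrow> c * x \<in> addgen Y" "w \<in> addgen X"
  shows "c * w \<in> addgen Y"
proof -
  have "addgen X \<subseteq> {w. c * w \<in> addgen Y}"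
    by (rule addgen_minimal) (simp_all add: addgen_0 distrib_left addgen_add assms(1))
  then show ?thesis using assms(2) by blast
qed

lemma addgen_mult_right:
  assumes "\<And>x. x \<in> X \<Longrightarrow> x * c \<in> addgen Y" "w \<in> addgen X"
  shows "w * c \<in> addgen Y"
proof -
  have "addgen X \<subseteq> {w. w * c \<in> addgen Y}"
    by (rule addgen_minimal) (simp_all add: addgen_0 distrib_right addgen_add assms(1))
  then show ?thesis using assms(2) by blast
qed

lemma iprod_mono: "Y \<subseteq> Z \<Longrightarrow> iprod X Y \<subseteq> iprod X Z"
  unfolding iprod_def addgen_def setmul_def by blast

lemma iprod_mult_right:
  assumes "\<And>z. z \<in> Y \<Longrightarrow> z * y \<in> Y" "w \<in> iprod X Y"
  shows "w * y \<in> iprod X Y"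
  unfolding iprod_def
proof (rule addgen_mult_right[OF _ assms(2)[unfolded iprod_def]])
  fix z assume "z \<in> setmul X Y"
  then have "z * y \<in> setmul X Y" using assms(1) unfolding setmul_iff by (metis mult.assoc)
  then show "z * y \<in> addgen (setmul X Y)" by (rule addgen_base)
qed

lemma loc_mono: "X \<subseteq> Y \<Longrightarrow> loc F p X \<subseteq> loc F p Y"
  unfolding loc_def by blast

context central_number_field
begin

definition OF_submodule :: "'a set \<Rightarrow> bool" where
  "OF_submodule X \<longleftrightarrow> 0 \<in> X \<and> (\<forall>x\<in>X. \<forall>y\<in>X. x + y \<in> X) \<and> (\<forall>a\<in>OF. \<forall>x\<in>X. a * x \<in> X)"

lemma OF_submodule_OF: "OF_submodule OF"
  by (auto simp: OF_submodule_def intro: OF_add OF_mult)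

lemma lattice_OF_submodule: "Defs.lattice F V L \<Longrightarrow> OF_submodule L"
  by (simp add: OF_submodule_def Defs.lattice_def)

end

locale number_field_place = central_number_field +
  fixes p :: "'a set"
  assumes finite_place: "finite_place F p"
begin

abbreviation "R \<equiv> loc F p OF"
abbreviation "P \<equiv> loc F p p"

lemma p_subset_OF: "p \<subseteq> OF"
  and p_prime: "a \<in> OF \<Longrightarrow> b \<in> OF \<Longrightarrow> a * b \<in> p \<Longrightarrow> a \<in> p \<or> b \<in> p"
  and OF_submodule_p: "OF_submodule p"
  using finite_place unfolding finite_place_def OF_submodule_def by blast+

lemma p_0: "0 \<in> p" and p_add: "x \<in> p \<Longrightarrow> y \<in> p \<Longrightarrow> x + y \<in> p"
  and p_absorb: "a \<in> OF \<Longrightarrow> x \<in> p \<Longrightarrow> a * x \<in> p"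
  using OF_submodule_p unfolding OF_submodule_def by blast+

lemma one_notin_p: "1 \<notin> p"
proof
  assume "1 \<in> p"
  then have "OF \<subseteq> p" using p_absorb[of _ 1] by fastforce
  then show False using p_subset_OF finite_place by (auto simp: finite_place_def)
qed

lemma OF_diff_p_mult: "s \<in> OF - p \<Longrightarrow> t \<in> OF - p \<Longrightarrow> s * t \<in> OF - p"
  using p_prime OF_mult by blast

lemma OF_diff_p_inverse:
  assumes s: "s \<in> OF - p"
  obtains s' where "s' \<in> R" "s * s' = 1" "s' * s = 1"
proof -
  have "s \<in> F" "s \<noteq> 0" using s p_0 OF_subset_F by auto
  then obtain s' where "s' \<in> F" "s * s' = 1" "s' * s = 1" using F_inverse by blast
  moreover have "s * s' \<in> OF" using \<open>s * s' = 1\<close> OF_1 by simp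
  then have "s' \<in> R" using s by (auto simp: loc_def)
  ultimately show ?thesis using that by blast
qed

lemma subset_loc: "X \<subseteq> loc F p X"
  unfolding loc_def using one_notin_p by (auto intro!: bexI[of _ 1])

lemma loc_subset_F:
  assumes "X \<subseteq> F" shows "loc F p X \<subseteq> F"
proof
  fix y assume "y \<in> loc F p X"
  then obtain s where s: "s \<in> OF - p" "s * y \<in> X" by (auto simp: loc_def)
  have "s \<in> F" "s \<noteq> 0" using s p_0 OF_subset_F by auto
  then obtain s' where s': "s' \<in> F" "s' * s = 1" using F_inverse by metis
  then have "s' * (s * y) \<in> F" using s(2) assms by blast
  then show "y \<in> F" using s' by (simp add: mult.assoc[symmetric])
qed

text \<open>Denominators in \<open>OF - p\<close> are central, so they can be collected in front of a product.\<close>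

lemma loc_mult:
  assumes "\<And>x y. x \<in> X \<Longrightarrow> y \<in> Y \<Longrightarrow> x * y \<in> Z" "x \<in> loc F p X" "y \<in> loc F p Y"
  shows "x * y \<in> loc F p Z"
proof -
  obtain s where s: "s \<in> OF - p" "s * x \<in> X" using assms(2) by (auto simp: loc_def)
  obtain t where t: "t \<in> OF - p" "t * y \<in> Y" using assms(3) by (auto simp: loc_def)
  have "t \<in> F" using t OF_subset_F by blast
  then have "(s * t) * (x * y) = (s * x) * (t * y)"
    by (simp add: mult.assoc F_left_commute)
  then have "(s * t) * (x * y) \<in> Z" using assms(1) s t by simp
  then show ?thesis unfolding loc_def using OF_diff_p_mult[OF s(1) t(1)] by blast
qed

lemma loc_add:
  assumes X: "OF_submodule X" and "x \<in> loc F p X" "y \<in> loc F p X"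
  shows "x + y \<in> loc F p X"
proof -
  obtain s where s: "s \<in> OF - p" "s * x \<in> X" using assms(2) by (auto simp: loc_def)
  obtain t where t: "t \<in> OF - p" "t * y \<in> X" using assms(3) by (auto simp: loc_def)
  have "t \<in> F" using t OF_subset_F by blast
  then have "s * t = t * s" using F_commute by simp
  then have "(s * t) * (x + y) = t * (s * x) + s * (t * y)"
    by (simp add: distrib_left mult.assoc[symmetric])
  also have "\<dots> \<in> X" using X s t unfolding OF_submodule_def by blast
  finally show ?thesis unfolding loc_def using OF_diff_p_mult[OF s(1) t(1)] by blast
qed

lemma R_mult_loc: "OF_submodule X \<Longrightarrow> r \<in> R \<Longrightarrow> x \<in> loc F p X \<Longrightarrow> r * x \<in> loc F p X"
  by (rule loc_mult) (auto simp: OF_submodule_def)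

lemma loc_diff:
  assumes X: "OF_submodule X" and "x \<in> loc F p X" "y \<in> loc F p X"
  shows "x - y \<in> loc F p X"
proof -
  have "- 1 \<in> R" using subset_loc OF_of_int[of "- 1"] by auto
  then have "(- 1) * y \<in> loc F p X" using R_mult_loc[OF X] assms(3) by blast
  then have "x + (- 1) * y \<in> loc F p X" by (rule loc_add[OF X assms(2)])
  then show ?thesis by simp
qed

lemma OF_subset_R: "OF \<subseteq> R"
  by (rule subset_loc)

lemma R_subset_F: "R \<subseteq> F"
  using loc_subset_F OF_subset_F by blast

lemma R_add: "x \<in> R \<Longrightarrow> y \<in> R \<Longrightarrow> x + y \<in> R"
  using loc_add[OF OF_submodule_OF] .

lemma R_mult: "x \<in> R \<Longrightarrow> y \<in> R \<Longrightarrow> x * y \<in> R"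
  by (rule loc_mult) (auto intro: OF_mult)

lemma R_1: "1 \<in> R"
  using OF_subset_R OF_1 by blast

lemma R_power: "x \<in> R \<Longrightarrow> x ^ n \<in> R"
  by (induction n) (simp_all add: R_1 R_mult)

lemma P_diff: "x \<in> P \<Longrightarrow> y \<in> P \<Longrightarrow> x - y \<in> P"
  using loc_diff[OF OF_submodule_p] .

lemma OF_inter_P:
  assumes "y \<in> OF" shows "y \<in> P \<longleftrightarrow> y \<in> p"
proof
  assume "y \<in> P"
  then obtain s where "s \<in> OF - p" "s * y \<in> p" by (auto simp: loc_def)
  then show "y \<in> p" using p_prime assms by blast
qed (use subset_loc in blast)

lemma R_unit:
  assumes "y \<in> R" "y \<notin> P"
  obtains z where "z \<in> R" "y * z = 1" "z * y = 1"
proof -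
  obtain s where s: "s \<in> OF - p" "s * y \<in> OF" using assms(1) by (auto simp: loc_def)
  have sy: "s * y \<in> OF - p" using assms(2) s by (auto simp: loc_def)
  obtain z' where z': "z' \<in> R" "(s * y) * z' = 1" using OF_diff_p_inverse[OF sy] by blast
  define z where "z = z' * s"
  have "z \<in> R" using z'(1) s(1) OF_subset_R R_mult by (auto simp: z_def)
  moreover have "y * z = 1"
    using z'(2) F_commute[of s "y * z'"] s(1) OF_subset_F by (auto simp: z_def mult.assoc)
  moreover have "z * y = 1"
    using calculation R_subset_F F_commute[of z y] by auto
  ultimately show ?thesis using that by blast
qed

end

section \<open>The local ring at a finite place is a valuation ring\<close>

lemma sum_powers_absorb_top_coeff:
  fixes a :: "nat \<Rightarrow> 'a::ring_1"
  shows "(\<Sum>i\<le>n. (a(n := a n + a (Suc n) * u)) i * u ^ i) = (\<Sum>i\<le>Suc n. a i * u ^ i)"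
proof -
  have "(\<Sum>i\<le>n. (a(n := a n + a (Suc n) * u)) i * u ^ i)
      = (\<Sum>i\<le>n. a i * u ^ i + (if i = n then a (Suc n) * u * u ^ i else 0))"
    by (rule sum.cong) (auto simp: distrib_right)
  also have "\<dots> = (\<Sum>i\<le>Suc n. a i * u ^ i)"
    by (simp add: sum.distrib mult.assoc)
  finally show ?thesis .
qed

context number_field_place
begin

lemma common_denominator:
  assumes "finite I" "\<And>i. i \<in> I \<Longrightarrow> r i \<in> R"
  obtains s where "s \<in> OF - p" "\<And>i. i \<in> I \<Longrightarrow> s * r i \<in> OF"
  using assms
proof (induction I arbitrary: thesis rule: finite_induct)
  case empty
  then show ?case using OF_1 one_notin_p by blast
next
  case (insert j I)
  then obtain s where s: "s \<in> OF - p" "\<And>i. i \<in> I \<Longrightarrow> s * r i \<in> OF" by auto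
  obtain t where t: "t \<in> OF - p" "t * r j \<in> OF" using insert.prems(2)[of j] by (auto simp: loc_def)
  have "t \<in> F" using t OF_subset_F by blast
  have "(s * t) * r i \<in> OF" if "i \<in> insert j I" for i
  proof (cases "i = j")
    case True
    then show ?thesis using s t by (simp add: mult.assoc OF_mult)
  next
    case False
    then have "(s * t) * r i = t * (s * r i)"
      using F_left_commute[OF \<open>t \<in> F\<close>, of s "r i"] by (simp add: mult.assoc)
    then show ?thesis using s t that False by (simp add: OF_mult)
  qed
  then show ?case using insert.prems(1) OF_diff_p_mult[OF s(1) t(1)] by blast
qed

lemma R_integrally_closed:
  assumes u: "u \<in> F" and root: "u ^ n + (\<Sum>i<n. r i * u ^ i) = 0" and r: "\<And>i. i < n \<Longrightarrow> r i \<in> R"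
  shows "u \<in> R"
proof -
  obtain s where s: "s \<in> OF - p" "\<And>i. i < n \<Longrightarrow> s * r i \<in> OF"
    using common_denominator[of "{..<n}" r] r by auto
  have sF: "s \<in> F" using s OF_subset_F by auto
  have "s ^ n * (r i * u ^ i) = (r i * s ^ (n - i)) * (s * u) ^ i" if "i < n" for i
    using power_mult_monomial[OF sF, of "r i" i n] r[OF that] R_subset_F that by auto
  then have "(s * u) ^ n + (\<Sum>i<n. (r i * s ^ (n - i)) * (s * u) ^ i) = s ^ n * (u ^ n + (\<Sum>i<n. r i * u ^ i))"
    by (simp add: distrib_left sum_distrib_left power_mult_central[OF sF])
  also have "\<dots> = 0" using root by simp
  finally have root': "(s * u) ^ n + (\<Sum>i<n. (r i * s ^ (n - i)) * (s * u) ^ i) = 0" .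
  have "r i * s ^ (n - i) = (s * r i) * s ^ (n - Suc i)" if "i < n" for i
    using that F_commute[OF sF, of "r i"] by (simp add: Suc_diff_Suc[symmetric] mult.assoc)
  then have "r i * s ^ (n - i) \<in> OF" if "i < n" for i
    using s that OF_mult OF_power by simp
  then have "s * u \<in> OF" using OF_integrally_closed[OF _ root'] sF u by blast
  then show ?thesis unfolding loc_def using s by auto
qed

lemma lead_coeff_mult_root_in_R:
  assumes u: "u \<in> F" and a: "\<And>i. i \<le> Suc n \<Longrightarrow> a i \<in> R"
    and root: "(\<Sum>i\<le>Suc n. a i * u ^ i) = 0"
  shows "a (Suc n) * u \<in> R"
proof -
  define c where "c = a (Suc n)"
  have c: "c \<in> F" using a R_subset_F by (auto simp: c_def)
  have "c ^ n * (a i * u ^ i) = (a i * c ^ (n - i)) * (c * u) ^ i" if "i \<le> n" for i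
    using power_mult_monomial[OF c, of "a i" i n] a[of i] R_subset_F that by auto
  then have low: "(\<Sum>i\<le>n. c ^ n * (a i * u ^ i)) = (\<Sum>i<Suc n. (a i * c ^ (n - i)) * (c * u) ^ i)"
    unfolding lessThan_Suc_atMost by (auto intro!: sum.cong)
  have top: "c ^ n * (c * u ^ Suc n) = (c * u) ^ Suc n"
    unfolding power_mult_central[OF c] by (simp only: mult.assoc[symmetric] power_Suc2)
  have "0 = c ^ n * (\<Sum>i\<le>Suc n. a i * u ^ i)" using root by simp
  also have "\<dots> = (\<Sum>i\<le>n. c ^ n * (a i * u ^ i)) + c ^ n * (c * u ^ Suc n)"
    by (simp only: sum.atMost_Suc distrib_left sum_distrib_left c_def)
  finally have root': "(c * u) ^ Suc n + (\<Sum>i<Suc n. (a i * c ^ (n - i)) * (c * u) ^ i) = 0"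
    unfolding low top by (simp add: add.commute)
  have "a i * c ^ (n - i) \<in> R" if "i < Suc n" for i
    using a that by (simp add: c_def R_mult R_power)
  then have "c * u \<in> R" using R_integrally_closed[OF _ root'] c u by blast
  then show ?thesis by (simp add: c_def)
qed

lemma absorb_top_coeff_keeps_coeff_notin_P:
  assumes "a (Suc n) \<in> P" "v \<in> P" "\<exists>k\<le>Suc n. a k \<notin> P"
  shows "\<exists>k\<le>n. (a(n := a n + v)) k \<notin> P"
proof -
  obtain k where k: "k \<le> Suc n" "a k \<notin> P" using assms(3) by blast
  then have "k \<le> n" using assms(1) by (auto simp: le_Suc_eq)
  moreover have "(a(n := a n + v)) k \<notin> P"
  proof
    assume A: "(a(n := a n + v)) k \<in> P"
    show False
    proof (cases "k = n")
      case True
      then have "(a n + v) - v \<in> P" using A P_diff[of "a n + v" v] assms(2) by simp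
      then show False using k True by simp
    qed (use A k in simp)
  qed
  ultimately show ?thesis by blast
qed

text \<open>Induction on the degree: either the leading coefficient \<open>c\<close> or \<open>c u\<close> (which is integral
  over \<open>R\<close>) is a unit, or both lie in \<open>P\<close> and \<open>c u\<^sup>n\<^sup>+\<^sup>1\<close> is absorbed into the coefficient
  of \<open>u\<^sup>n\<close>.\<close>

lemma R_or_inverse_R_of_root:
  assumes u: "u \<in> F" "u \<noteq> 0"
  shows "(\<And>i. i \<le> n \<Longrightarrow> a i \<in> R) \<Longrightarrow> \<exists>k\<le>n. a k \<notin> P \<Longrightarrow> (\<Sum>i\<le>n. a i * u ^ i) = 0
    \<Longrightarrow> u \<in> R \<or> (\<exists>v\<in>R. u * v = 1)"
proof (induction n arbitrary: a)
  case 0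
  then show ?case using subset_loc p_0 by auto
next
  case (Suc n)
  define c where "c = a (Suc n)"
  define v where "v = c * u"
  have v: "v \<in> R" using lead_coeff_mult_root_in_R[OF u(1)] Suc.prems by (simp add: v_def c_def)
  have cR: "c \<in> R" using Suc.prems(1) by (simp add: c_def)
  consider "c \<notin> P" | "c \<in> P" "v \<notin> P" | "c \<in> P" "v \<in> P" by blast
  then show ?case
  proof cases
    case 1
    then obtain b where "b \<in> R" "b * c = 1" using R_unit cR by metis
    then have "u = b * v" by (simp add: v_def mult.assoc[symmetric])
    then show ?thesis using \<open>b \<in> R\<close> v R_mult by simp
  next
    case 2
    then obtain w where "w \<in> R" "v * w = 1" using R_unit v by metis
    moreover have "u * (c * w) = v * w"
      using F_commute[OF u(1), of c] by (simp add: v_def mult.assoc[symmetric])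
    ultimately show ?thesis using cR R_mult by auto
  next
    case 3
    define a' where "a' = a(n := a n + v)"
    have "\<forall>i\<le>n. a' i \<in> R" using Suc.prems(1) v R_add by (simp add: a'_def)
    moreover have "(\<Sum>i\<le>n. a' i * u ^ i) = 0"
      using sum_powers_absorb_top_coeff[of a n u] Suc.prems(3) by (simp add: a'_def v_def c_def)
    moreover have "\<exists>k\<le>n. a' k \<notin> P"
      using absorb_top_coeff_keeps_coeff_notin_P 3 Suc.prems(2) by (simp add: a'_def c_def)
    ultimately show ?thesis using Suc.IH by blast
  qed
qed

lemma of_int_Gcd_in_p:
  assumes "finite A" "\<And>a. a \<in> A \<Longrightarrow> (of_int a :: 'a) \<in> p"
  shows "(of_int (Gcd A) :: 'a) \<in> p"
  using assms
proof (induction A rule: finite_induct)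
  case empty
  then show ?case using p_0 by simp
next
  case (insert a A)
  obtain x y where "x * a + y * Gcd A = gcd a (Gcd A)" using bezout_int by blast
  then have "(of_int (Gcd (insert a A)) :: 'a) = of_int x * of_int a + of_int y * of_int (Gcd A)"
    by (metis Gcd_insert of_int_add of_int_mult)
  also have "\<dots> \<in> p" using p_add p_absorb OF_of_int insert by simp
  finally show ?case .
qed

lemma int_relation_with_coeff_notin_p:
  assumes "x \<in> F"
  obtains m and e :: "nat \<Rightarrow> int"
  where "(\<Sum>i\<le>m. of_int (e i) * x ^ i) = 0" "\<exists>k\<le>m. (of_int (e k) :: 'a) \<notin> p"
proof -
  obtain m d where d: "d m \<noteq> 0" "(\<Sum>i\<le>m. of_int (d i) * x ^ i) = 0"
    using F_algebraic[OF assms] by blast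
  define g where "g = Gcd (d ` {..m})"
  have g: "g \<noteq> 0" using d(1) by (auto simp: g_def)
  define e where "e i = d i div g" for i
  have de: "d i = g * e i" if "i \<le> m" for i
    using that by (simp add: e_def g_def Gcd_dvd)
  have "d ` {..m} = (*) g ` e ` {..m}"
    using de by (auto simp: image_image intro!: image_cong)
  then have "g = normalize (g * Gcd (e ` {..m}))"
    using Gcd_mult g_def by metis
  then have "Gcd (e ` {..m}) = 1"
    using g g_def by (simp add: abs_mult)
  then have "\<exists>k\<le>m. (of_int (e k) :: 'a) \<notin> p"
    using of_int_Gcd_in_p[of "e ` {..m}"] one_notin_p by auto
  moreover have "(of_int g :: 'a) * (\<Sum>i\<le>m. of_int (e i) * x ^ i) = 0"
    using d(2) by (simp add: sum_distrib_left de mult.assoc)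
  then have "(\<Sum>i\<le>m. of_int (e i) * x ^ i) = 0"
    using F_cancel_left[OF F_of_int of_int_neq_0[OF g]] by blast
  ultimately show ?thesis using that by blast
qed

lemma R_or_inverse_in_R:
  assumes "u \<in> F" "u \<noteq> 0"
  shows "u \<in> R \<or> (\<exists>v\<in>R. u * v = 1)"
proof -
  obtain m e where root: "(\<Sum>i\<le>m. of_int (e i) * u ^ i) = 0"
    and k: "\<exists>k\<le>m. (of_int (e k) :: 'a) \<notin> p"
    by (rule int_relation_with_coeff_notin_p[OF assms(1)])
  have unit: "\<exists>k\<le>m. (of_int (e k) :: 'a) \<notin> P"
    using k OF_inter_P[OF OF_of_int] by simp
  have coeffs: "(of_int (e i) :: 'a) \<in> R" if "i \<le> m" for i
    using OF_subset_R OF_of_int by blast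
  show ?thesis
    by (rule R_or_inverse_R_of_root[OF assms coeffs unit root])
qed

lemma R_divisibility_total:
  assumes x: "x \<in> F" and y: "y \<in> F"
  shows "(\<exists>r\<in>R. x = y * r) \<or> (\<exists>r\<in>R. y = x * r)"
proof (cases "x = 0 \<or> y = 0")
  case True
  have "0 \<in> R" using OF_subset_R OF_0 by blast
  then show ?thesis using True by (metis mult_zero_right)
next
  case False
  then obtain y' where y': "y' \<in> F" "y * y' = 1"
    using F_inverse[OF y] by metis
  define u where "u = y' * x"
  have x_eq: "x = y * u" using y'(2) by (simp add: u_def mult.assoc[symmetric])
  have "u \<in> F" unfolding u_def using y'(1) x by blast
  moreover have "u \<noteq> 0" using x_eq False mult_zero_right by metis
  ultimately consider "u \<in> R" | v where "v \<in> R" "u * v = 1"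
    using R_or_inverse_in_R by metis
  then show ?thesis
  proof cases
    case (2 v)
    then have "y = x * v" by (simp add: x_eq mult.assoc)
    then show ?thesis using 2 by blast
  qed (use x_eq in blast)
qed

lemma iprod_p_loc_factor:
  assumes X: "OF_submodule X" and w: "w \<in> iprod p (loc F p X)"
  shows "\<exists>a\<in>p. \<exists>y\<in>loc F p X. w = a * y"
proof -
  let ?M = "loc F p X"
  have "addgen (setmul p ?M) \<subseteq> {w. \<exists>a\<in>p. \<exists>y\<in>?M. w = a * y}"
  proof (rule addgen_minimal)
    have "0 \<in> ?M" using X subset_loc by (auto simp: OF_submodule_def)
    then show "0 \<in> {w. \<exists>a\<in>p. \<exists>y\<in>?M. w = a * y}" using p_0 by force
    fix z w assume "z \<in> setmul p ?M" and "w \<in> {w. \<exists>a\<in>p. \<exists>y\<in>?M. w = a * y}"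
    then obtain a1 y1 a2 y2 where a: "a1 \<in> p" "a2 \<in> p" and y: "y1 \<in> ?M" "y2 \<in> ?M"
      and zw: "z = a1 * y1" "w = a2 * y2"
      by (auto simp: setmul_iff)
    have "a1 \<in> F" "a2 \<in> F" using a p_subset_OF OF_subset_F by auto
    then consider r where "r \<in> R" "a2 = a1 * r" | r where "r \<in> R" "a1 = a2 * r"
      using R_divisibility_total by blast
    then show "z + w \<in> {w. \<exists>a\<in>p. \<exists>y\<in>?M. w = a * y}"
    proof cases
      case (1 r)
      then have "z + w = a1 * (y1 + r * y2)" by (simp add: zw distrib_left mult.assoc)
      moreover have "y1 + r * y2 \<in> ?M" using loc_add[OF X] R_mult_loc[OF X] 1 y by blast
      ultimately show ?thesis using a by blast
    next
      case (2 r)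
      then have "z + w = a2 * (r * y1 + y2)" by (simp add: zw distrib_left mult.assoc)
      moreover have "r * y1 + y2 \<in> ?M" using loc_add[OF X] R_mult_loc[OF X] 2 y by blast
      ultimately show ?thesis using a by blast
    qed
  qed
  then show ?thesis using w unfolding iprod_def by blast
qed

end

section \<open>The extended ideal and the comparison at a place\<close>

context central_number_field
begin

definition OF_span :: "'a set \<Rightarrow> 'a set" where
  "OF_span G = {w. \<exists>c. (\<forall>g\<in>G. c g \<in> OF) \<and> w = (\<Sum>g\<in>G. c g * g)}"

lemma lattice_iff:
  "Defs.lattice F V L \<longleftrightarrow> L \<subseteq> V \<and> OF_submodule L \<and> (\<exists>G. finite G \<and> G \<subseteq> L \<and> L \<subseteq> OF_span G) \<and>
     (\<forall>v\<in>V. \<exists>n::int. n \<noteq> 0 \<and> of_int n * v \<in> L)"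
  unfolding Defs.lattice_def OF_submodule_def OF_span_def by blast

lemma OF_span_0: "0 \<in> OF_span G"
  unfolding OF_span_def by (auto intro!: exI[of _ "\<lambda>_. 0"])

lemma OF_span_add:
  assumes "x \<in> OF_span G" "y \<in> OF_span G" shows "x + y \<in> OF_span G"
proof -
  obtain c d where "\<forall>g\<in>G. c g \<in> OF" "x = (\<Sum>g\<in>G. c g * g)"
     "\<forall>g\<in>G. d g \<in> OF" "y = (\<Sum>g\<in>G. d g * g)"
    using assms unfolding OF_span_def by blast
  then show ?thesis unfolding OF_span_def
    by (intro CollectI exI[of _ "\<lambda>g. c g + d g"]) (auto simp: sum.distrib distrib_right intro: OF_add)
qed

lemma OF_span_mult:
  assumes fin: "finite G" "finite H" and y: "y \<in> OF_span G" and z: "z \<in> OF_span H"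
  shows "y * z \<in> OF_span ((\<lambda>(g, h). g * h) ` (G \<times> H))"
proof -
  obtain c where c: "\<forall>g\<in>G. c g \<in> OF" "y = (\<Sum>g\<in>G. c g * g)"
    using y unfolding OF_span_def by blast
  obtain d where d: "\<forall>h\<in>H. d h \<in> OF" "z = (\<Sum>h\<in>H. d h * h)"
    using z unfolding OF_span_def by blast
  define \<phi> where "\<phi> = (\<lambda>(g::'a, h::'a). g * h)"
  define e where "e = (\<lambda>(g, h). c g * d h)"
  have e: "e q \<in> OF" if "q \<in> G \<times> H" for q
    using c d that by (auto simp: e_def intro: OF_mult)
  have "y * z = (\<Sum>g\<in>G. \<Sum>h\<in>H. (c g * g) * (d h * h))"
    unfolding c(2) d(2) sum_distrib_right by (simp only: sum_distrib_left)
  also have "\<dots> = (\<Sum>g\<in>G. \<Sum>h\<in>H. e (g, h) * \<phi> (g, h))"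
  proof (intro sum.cong refl)
    fix g h assume "h \<in> H"
    then have "d h \<in> F" using d OF_subset_F by auto
    then have "g * (d h * h) = d h * (g * h)" by (rule F_left_commute)
    then show "(c g * g) * (d h * h) = e (g, h) * \<phi> (g, h)"
      by (simp add: e_def \<phi>_def mult.assoc)
  qed
  also have "\<dots> = (\<Sum>q\<in>G \<times> H. e q * \<phi> q)"
    by (simp add: sum.cartesian_product)
  also have "\<dots> = (\<Sum>k\<in>\<phi> ` (G \<times> H). \<Sum>q\<in>{q \<in> G \<times> H. \<phi> q = k}. e q * \<phi> q)"
    by (rule sum.image_gen[OF finite_cartesian_product[OF fin]])
  also have "\<dots> = (\<Sum>k\<in>\<phi> ` (G \<times> H). (\<Sum>q\<in>{q \<in> G \<times> H. \<phi> q = k}. e q) * k)"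
    by (intro sum.cong refl) (simp add: sum_distrib_right)
  finally have "y * z = (\<Sum>k\<in>\<phi> ` (G \<times> H). (\<Sum>q\<in>{q \<in> G \<times> H. \<phi> q = k}. e q) * k)" .
  moreover have "(\<Sum>q\<in>{q \<in> G \<times> H. \<phi> q = k}. e q) \<in> OF" for k
    using e by (auto intro!: OF_sum)
  ultimately have "y * z \<in> OF_span (\<phi> ` (G \<times> H))"
    unfolding OF_span_def by (intro CollectI exI[of _ "\<lambda>k. \<Sum>q\<in>{q \<in> G \<times> H. \<phi> q = k}. e q"]) blast
  then show ?thesis by (simp add: \<phi>_def)
qed

lemma iprod_OF_submodule: "OF_submodule X \<Longrightarrow> OF_submodule (iprod X Y)"
  unfolding OF_submodule_def iprod_def
proof (intro conjI ballI)
  fix a w assume X: "0 \<in> X \<and> (\<forall>x\<in>X. \<forall>y\<in>X. x + y \<in> X) \<and> (\<forall>a\<in>OF. \<forall>x\<in>X. a * x \<in> X)"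
    and a: "a \<in> OF" and w: "w \<in> addgen (setmul X Y)"
  show "a * w \<in> addgen (setmul X Y)"
  proof (rule addgen_mult_left[OF _ w])
    fix z assume "z \<in> setmul X Y"
    then obtain x y where "x \<in> X" "y \<in> Y" "z = x * y" by (auto simp: setmul_iff)
    then have "a * z \<in> setmul X Y" using X a unfolding setmul_iff by (metis mult.assoc)
    then show "a * z \<in> addgen (setmul X Y)" by (rule addgen_base)
  qed
qed (simp_all add: addgen_0 addgen_add)

lemma iprod_OF_span:
  assumes "finite G" "X \<subseteq> OF_span G" "finite H" "Y \<subseteq> OF_span H"
  shows "iprod X Y \<subseteq> OF_span ((\<lambda>(g, h). g * h) ` (G \<times> H))"
  unfolding iprod_def
proof (rule addgen_minimal)
  fix z w assume z: "z \<in> setmul X Y" and w: "w \<in> OF_span ((\<lambda>(g, h). g * h) ` (G \<times> H))"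
  obtain x y where "x \<in> X" "y \<in> Y" "z = x * y" using z by (auto simp: setmul_iff)
  then have "z \<in> OF_span ((\<lambda>(g, h). g * h) ` (G \<times> H))"
    using OF_span_mult assms by blast
  then show "z + w \<in> OF_span ((\<lambda>(g, h). g * h) ` (G \<times> H))"
    using w by (rule OF_span_add)
qed (rule OF_span_0)

lemma frac_right_ideal_iprod:
  assumes b: "Defs.lattice F K b" "1 \<in> K" and order: "is_order F UNIV \<O>"
  shows "frac_right_ideal F UNIV \<O> (iprod b \<O>)"
proof -
  have O_lattice: "Defs.lattice F UNIV \<O>" and O_mult: "\<And>x y. x \<in> \<O> \<Longrightarrow> y \<in> \<O> \<Longrightarrow> x * y \<in> \<O>"
    using order by (simp_all add: is_order_def)
  obtain G H where G: "finite G" "G \<subseteq> b" "b \<subseteq> OF_span G"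
    and H: "finite H" "H \<subseteq> \<O>" "\<O> \<subseteq> OF_span H"
    using b(1) O_lattice unfolding lattice_iff by metis
  have "(\<lambda>(g, h). g * h) ` (G \<times> H) \<subseteq> iprod b \<O>"
  proof
    fix k assume "k \<in> (\<lambda>(g, h). g * h) ` (G \<times> H)"
    then obtain g h where "g \<in> G" "h \<in> H" "k = g * h" by auto
    then have "k \<in> setmul b \<O>" using G(2) H(2) unfolding setmul_iff by blast
    then show "k \<in> iprod b \<O>" unfolding iprod_def by (rule addgen_base)
  qed
  moreover have "iprod b \<O> \<subseteq> OF_span ((\<lambda>(g, h). g * h) ` (G \<times> H))"
    using iprod_OF_span G H by blast
  moreover have "\<exists>n::int. n \<noteq> 0 \<and> of_int n * v \<in> iprod b \<O>" for v
  proof -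
    obtain m :: int where m: "m \<noteq> 0" "of_int m * 1 \<in> b" using b unfolding lattice_iff by blast
    obtain n :: int where n: "n \<noteq> 0" "of_int n * v \<in> \<O>" using O_lattice unfolding lattice_iff by blast
    have "of_int (m * n) * v = (of_int m * 1) * (of_int n * v)" by (simp add: mult.assoc)
    also have "\<dots> \<in> iprod b \<O>"
      unfolding iprod_def by (rule addgen_base) (use m n in \<open>unfold setmul_iff, blast\<close>)
    finally show ?thesis using m n by (intro exI[of _ "m * n"]) simp
  qed
  moreover have "setmul (iprod b \<O>) \<O> \<subseteq> iprod b \<O>"
  proof -
    have "w * y \<in> iprod b \<O>" if "w \<in> iprod b \<O>" "y \<in> \<O>" for w y
      using iprod_mult_right[OF _ that(1)] O_mult that(2) by blast
    then show ?thesis by (auto simp: setmul_iff)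
  qed
  moreover have "OF_submodule (iprod b \<O>)"
    using iprod_OF_submodule b(1) unfolding lattice_iff by blast
  moreover have "finite ((\<lambda>(g, h). g * h) ` (G \<times> H))" using G(1) H(1) by simp
  ultimately show ?thesis
    unfolding frac_right_ideal_def lattice_iff by blast
qed

end

context number_field_place
begin

lemma loc_primitive_principal_iff:
  assumes L: "loc F p L = setmul {x} (loc F p \<Lambda>)" "x \<in> A" "loc F p L \<subseteq> loc F p \<Lambda>"
    and \<Lambda>: "1 \<in> loc F p \<Lambda>" "\<And>y z. y \<in> loc F p \<Lambda> \<Longrightarrow> z \<in> loc F p \<Lambda> \<Longrightarrow> y * z \<in> loc F p \<Lambda>"
  shows "loc_primitive F A p \<Lambda> L \<longleftrightarrow> x \<notin> iprod p (loc F p \<Lambda>)"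
proof -
  have "setmul {x} (loc F p \<Lambda>) \<subseteq> iprod p (loc F p \<Lambda>) \<longleftrightarrow> x \<in> iprod p (loc F p \<Lambda>)"
  proof
    assume "setmul {x} (loc F p \<Lambda>) \<subseteq> iprod p (loc F p \<Lambda>)"
    moreover have "x * 1 \<in> setmul {x} (loc F p \<Lambda>)" using \<Lambda>(1) unfolding setmul_iff by blast
    ultimately show "x \<in> iprod p (loc F p \<Lambda>)" by auto
  next
    assume x: "x \<in> iprod p (loc F p \<Lambda>)"
    show "setmul {x} (loc F p \<Lambda>) \<subseteq> iprod p (loc F p \<Lambda>)"
    proof
      fix z assume "z \<in> setmul {x} (loc F p \<Lambda>)"
      then obtain y where "y \<in> loc F p \<Lambda>" "z = x * y" by (auto simp: setmul_iff)
      then show "z \<in> iprod p (loc F p \<Lambda>)"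
        using iprod_mult_right[OF \<Lambda>(2) x] by blast
    qed
  qed
  moreover have "\<exists>y\<in>A. loc F p L = setmul {y} (loc F p \<Lambda>)" using L(1,2) by blast
  ultimately show ?thesis unfolding loc_primitive_def using L(1,3) by simp
qed

end

locale place_order = number_field_place +
  fixes K \<O> :: "'a set"
  assumes subfield_K: "subfield K" and F_subset_K: "F \<subseteq> K" and order: "is_order F UNIV \<O>"
begin

abbreviation "Op \<equiv> loc F p \<O>"
abbreviation "Bp \<equiv> loc F p (K \<inter> \<O>)"

lemma K_mult: "x \<in> K \<Longrightarrow> y \<in> K \<Longrightarrow> x * y \<in> K"
  using subfield_K by (simp add: subfield_def)

lemma O_1: "1 \<in> \<O>" and O_mult: "x \<in> \<O> \<Longrightarrow> y \<in> \<O> \<Longrightarrow> x * y \<in> \<O>"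
  using order by (simp_all add: is_order_def)

lemma OF_submodule_O: "OF_submodule \<O>"
  using order lattice_OF_submodule unfolding is_order_def by blast

lemma Op_mult: "x \<in> Op \<Longrightarrow> y \<in> Op \<Longrightarrow> x * y \<in> Op"
  by (rule loc_mult) (auto intro: O_mult)

lemma Bp_subset_Op: "Bp \<subseteq> Op"
  by (rule loc_mono) blast

lemma Bp_mult: "x \<in> Bp \<Longrightarrow> y \<in> Bp \<Longrightarrow> x * y \<in> Bp"
  by (rule loc_mult) (auto intro: O_mult K_mult)

lemma one_Bp: "1 \<in> Bp"
proof -
  have "1 \<in> K \<inter> \<O>" using O_1 subfield_K by (simp add: subfield_def)
  then show ?thesis using subset_loc by blast
qed

lemma Op_inter_K: "y \<in> Op \<Longrightarrow> y \<in> K \<Longrightarrow> y \<in> Bp"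
  using F_subset_K OF_subset_F K_mult by (fastforce simp: loc_def)

text \<open>Since \<open>p Op = a Op\<close> for some \<open>a \<in> p \<subseteq> F \<subseteq> K\<close>, an element of \<open>K\<close> in \<open>p Op\<close> is \<open>a\<close>
  times an element of \<open>Op \<inter> K = Bp\<close>.\<close>

lemma K_inter_iprod_p_Op:
  assumes x: "x \<in> K" "x \<in> iprod p Op"
  shows "x \<in> iprod p Bp"
proof -
  obtain a y where ay: "a \<in> p" "y \<in> Op" "x = a * y"
    using iprod_p_loc_factor[OF OF_submodule_O x(2)] by blast
  show ?thesis
  proof (cases "a = 0")
    case True
    then show ?thesis using ay addgen_0 unfolding iprod_def by simp
  next
    case False
    have "a \<in> F" using ay(1) p_subset_OF OF_subset_F by blast
    then obtain a' where a': "a' \<in> F" "a' * a = 1" using F_inverse False by metis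
    have "y = a' * x" using a' ay(3) by (simp add: mult.assoc[symmetric])
    then have "y \<in> K" using a'(1) F_subset_K K_mult x(1) by blast
    then have "x \<in> setmul p Bp" using ay Op_inter_K unfolding setmul_iff by blast
    then show ?thesis unfolding iprod_def by (rule addgen_base)
  qed
qed

lemma loc_setmul_Op_subset: "loc F p (setmul {x} Op) \<subseteq> setmul {x} Op"
proof
  fix z assume "z \<in> loc F p (setmul {x} Op)"
  then obtain s q where s: "s \<in> OF - p" and q: "q \<in> Op" "s * z = x * q"
    by (auto simp: loc_def setmul_iff)
  obtain s' where s': "s' \<in> R" "s' * s = 1" using OF_diff_p_inverse[OF s] by metis
  have "s' \<in> F" using s'(1) R_subset_F by blast
  have "z = s' * (s * z)" using s'(2) by (simp add: mult.assoc[symmetric])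
  also have "\<dots> = x * (s' * q)" unfolding q(2) by (rule F_left_commute[OF \<open>s' \<in> F\<close>, symmetric])
  finally have "z = x * (s' * q)" .
  moreover have "s' * q \<in> Op" using R_mult_loc[OF OF_submodule_O s'(1) q(1)] .
  ultimately show "z \<in> setmul {x} Op" unfolding setmul_iff by blast
qed

lemma iprod_subset_principal:
  assumes bp: "loc F p b = setmul {x} Bp"
  shows "iprod b \<O> \<subseteq> setmul {x} Op"
  unfolding iprod_def
proof (rule addgen_minimal)
  have "0 \<in> Op" using subset_loc OF_submodule_O unfolding OF_submodule_def by blast
  then show "0 \<in> setmul {x} Op" unfolding setmul_iff by (metis mult_zero_right singletonI)
  fix z w assume z: "z \<in> setmul b \<O>" and w: "w \<in> setmul {x} Op"
  obtain u v where uv: "u \<in> b" "v \<in> \<O>" "z = u * v" using z by (auto simp: setmul_iff)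
  have "u \<in> loc F p b" using uv(1) subset_loc by blast
  then obtain c where c: "c \<in> Bp" "u = x * c" unfolding bp setmul_iff by blast
  obtain q where q: "q \<in> Op" "w = x * q" using w by (auto simp: setmul_iff)
  have "z + w = x * (c * v + q)" by (simp add: uv(3) c(2) q(2) distrib_left mult.assoc)
  moreover have "c * v \<in> Op"
    using Op_mult[of c v] Bp_subset_Op c(1) subset_loc uv(2) by blast
  then have "c * v + q \<in> Op" using loc_add[OF OF_submodule_O _ q(1)] by blast
  ultimately show "z + w \<in> setmul {x} Op" unfolding setmul_iff by blast
qed

lemma loc_iprod_principal:
  assumes bp: "loc F p b = setmul {x} Bp"
  shows "loc F p (iprod b \<O>) = setmul {x} Op"
proof
  show "loc F p (iprod b \<O>) \<subseteq> setmul {x} Op"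
    using loc_mono[OF iprod_subset_principal[OF bp]] loc_setmul_Op_subset by blast
  have x: "x \<in> loc F p b" unfolding bp setmul_iff using one_Bp by force
  show "setmul {x} Op \<subseteq> loc F p (iprod b \<O>)"
  proof
    fix z assume "z \<in> setmul {x} Op"
    then obtain y where y: "y \<in> Op" "z = x * y" by (auto simp: setmul_iff)
    have "x * y \<in> loc F p (iprod b \<O>)"
    proof (rule loc_mult[OF _ x y(1)])
      fix u v assume "u \<in> b" "v \<in> \<O>"
      then have "u * v \<in> setmul b \<O>" unfolding setmul_iff by blast
      then show "u * v \<in> iprod b \<O>" unfolding iprod_def by (rule addgen_base)
    qed
    then show "z \<in> loc F p (iprod b \<O>)" using y(2) by simp
  qed
qed

lemma loc_primitive_iff:
  assumes b: "b \<subseteq> K \<inter> \<O>" and x: "x \<in> K" and bp: "loc F p b = setmul {x} Bp"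
  shows "loc_primitive F K p (K \<inter> \<O>) b \<longleftrightarrow> loc_primitive F UNIV p \<O> (iprod b \<O>)"
proof -
  have bOp: "loc F p (iprod b \<O>) = setmul {x} Op"
    by (rule loc_iprod_principal[OF bp])
  have "iprod b \<O> \<subseteq> \<O>"
    unfolding iprod_def
    by (rule addgen_minimal) (use b OF_submodule_O O_mult in \<open>auto simp: setmul_iff OF_submodule_def\<close>)
  then have "loc F p (iprod b \<O>) \<subseteq> Op" by (rule loc_mono)
  then have "loc_primitive F UNIV p \<O> (iprod b \<O>) \<longleftrightarrow> x \<notin> iprod p Op"
    using loc_primitive_principal_iff[OF bOp _ _ _ Op_mult] one_Bp Bp_subset_Op by blast
  moreover have "loc_primitive F K p (K \<inter> \<O>) b \<longleftrightarrow> x \<notin> iprod p Bp"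
    using loc_primitive_principal_iff[OF bp x _ one_Bp Bp_mult] loc_mono[OF b] by blast
  moreover have "x \<in> iprod p Bp \<longleftrightarrow> x \<in> iprod p Op"
    using K_inter_iprod_p_Op[OF x] iprod_mono[OF Bp_subset_Op] by blast
  ultimately show ?thesis by blast
qed

end

theorem lemma2p6:
  fixes F K \<O> b :: "'a::ring_1 set"
  assumes "number_field F"
    and "quaternion_algebra F"
    and "is_order F UNIV \<O>"
    and "maximal_subfield F K"
    and "frac_right_ideal F K (K \<inter> \<O>) b"
    and "b \<subseteq> K \<inter> \<O>"
    and "locally_principal F K (K \<inter> \<O>) b"
  shows "primitive F K (K \<inter> \<O>) b \<longleftrightarrow> primitive F UNIV \<O> (iprod b \<O>)"
proof -
  have "F \<subseteq> center" using assms(2) by (simp add: quaternion_algebra_def)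
  then interpret central_number_field F
    using assms(1) by unfold_locales
  have K: "subfield K" "F \<subseteq> K" using assms(4) by (simp_all add: maximal_subfield_def)
  have "Defs.lattice F K b" "1 \<in> K"
    using assms(5) K(1) by (simp_all add: frac_right_ideal_def subfield_def)
  then have "frac_right_ideal F UNIV \<O> (iprod b \<O>)"
    using assms(3) by (rule frac_right_ideal_iprod)
  moreover have "loc_primitive F K p (K \<inter> \<O>) b \<longleftrightarrow> loc_primitive F UNIV p \<O> (iprod b \<O>)"
    if p: "finite_place F p" for p
  proof -
    interpret place_order F p K \<O>
      using K assms(3) p by unfold_locales
    obtain x where "x \<in> K" "loc F p b = setmul {x} Bp"
      using assms(7) p unfolding locally_principal_def by blast
    then show ?thesis using loc_primitive_iff assms(6) by blast
  qed
  ultimately show ?thesis using assms(5) unfolding primitive_def by blast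
qed

end
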